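(* Let $\sim$ denote either $\cong$ or $\simeq$, and let $A,B,C,D$ be type expressions. (1) $\bullet A\sim\bullet B$ if and only if $A\sim B$. (2) $A\to B\sim C\to D$ if and only if either (a) $A\sim C$ and $B\sim D$, or (b) $B\sim D\sim\top$.
   Context: Type expressions: fix a countably infinite set of type variables $X,Y,Z,\dots$. Pseudo type expressions are generated by $A::=X\mid A\to A\mid \bullet A\mid \mu X.A$ ($\mu$ binds $X$; $\alpha$-convertible expressions are identified; $\to$ associates to the right; $\bullet$ binds tighter than $\to$, which binds tighter than $\mu$). $A[B/X]$ denotes capture-avoiding substitution. $\top$ abbreviates $\mu X.\bullet X$, and $\bullet^n A$ denotes $A$ prefixed by $n$ copies of $\bullet$. The tail $t(A)$ is defined by $t(X)=X$, $t(A\to B)=t(B)$, $t(\bullet A)=\bullet t(A)$, $t(\mu X.A)=\mu X.t(A)$; it always has the form $\bullet^{m_0}\mu X_1.\bullet^{m_1}\mu X_2.\cdots\mu X_n.\bullet^{m_n}Y$. $A$ is a $\top$-variant iff $Y=X_i$ for some $1\le i\le n$ with $X_i\notin\{X_{i+1},\dots,X_n\}$ and $m_i+\dots+m_n\ge 1$. $A$ is proper in $X$ iff: a variable $Y$ is proper in $X$ iff $Y\neq X$; $\bullet A$ is always proper in $X$; $A\to B$ is proper in $X$ iff both $A,B$ are proper in $X$ or $B$ is a $\top$-variant; for $Y\ne X$, $\mu Y.A$ is proper in $X$ iff $A$ is proper in $X$ or $\mu Y.A$ is a $\top$-variant. Type expressions are the least set of pseudo type expressions containing all type variables, closed under $\to$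 and $\bullet$, and containing $\mu X.A$ whenever it contains $A$ and $A$ is proper in $X$. Equality: $\cong$ is the least relation on type expressions such that: $A\cong A$; $A\cong B$ implies $B\cong A$; $A\cong B$ and $B\cong C$ imply $A\cong C$; $A\cong B$ implies $\bullet A\cong\bullet B$; $A\cong C$ and $B\cong D$ imply $A\to B\cong C\to D$; $A\to\top\cong\top$; $\mu X.A\cong A[\mu X.A/X]$; and if $A\cong C[A/X]$ with $C$ proper in $X$, then $A\cong\mu X.C$. $\simeq$ is the least relation satisfying the same closure conditions and additionally $\bullet(A\to B)\simeq\bullet A\to\bullet B$. *)

theory Defs
  imports Main
begin

text \<open>Pseudo type expressions in de Bruijn representation: alpha-convertible
  expressions are identified by construction.  TVar i is a bound variable if
  i is smaller than the number of enclosing Mu binders, otherwise a free type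
  variable (free variables form a countably infinite set).\<close>

datatype ty = TVar nat | Arr ty ty | Later ty | Mu ty

fun lift :: "nat \<Rightarrow> ty \<Rightarrow> ty" where
  "lift k (TVar i) = (if i < k then TVar i else TVar (Suc i))"
| "lift k (Arr A B) = Arr (lift k A) (lift k B)"
| "lift k (Later A) = Later (lift k A)"
| "lift k (Mu A) = Mu (lift (Suc k) A)"

fun subst :: "nat \<Rightarrow> ty \<Rightarrow> ty \<Rightarrow> ty" where
  "subst k (TVar i) s = (if i < k then TVar i else if i = k then s else TVar (i - 1))"
| "subst k (Arr A B) s = Arr (subst k A s) (subst k B s)"
| "subst k (Later A) s = Later (subst k A s)"
| "subst k (Mu A) s = Mu (subst (Suc k) A (lift 0 s))"

definition top :: ty where "top = Mu (Later (TVar 0))"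

fun tail :: "ty \<Rightarrow> ty" where
  "tail (TVar i) = TVar i"
| "tail (Arr A B) = tail B"
| "tail (Later A) = Later (tail A)"
| "tail (Mu A) = Mu (tail A)"

text \<open>On a tail bullet^m0 mu X1. bullet^m1 ... mu Xn. bullet^mn Y:
  the list ms records, for each enclosing binder (innermost first), the number
  of bullets between that binder and the current position.  Y = X_i with X_i
  the innermost binder of that name corresponds to the de Bruijn index of Y
  pointing to that binder, and m_i + ... + m_n is the recorded count.\<close>
fun tv :: "nat list \<Rightarrow> ty \<Rightarrow> bool" where
  "tv ms (TVar j) = (j < length ms \<and> ms ! j \<ge> 1)"
| "tv ms (Later A) = tv (map Suc ms) A"
| "tv ms (Mu A) = tv (0 # ms) A"
| "tv ms (Arr A B) = False"

definition top_variant :: "ty \<Rightarrow> bool" where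
  "top_variant A = tv [] (tail A)"

fun proper :: "nat \<Rightarrow> ty \<Rightarrow> bool" where
  "proper i (TVar j) = (j \<noteq> i)"
| "proper i (Later A) = True"
| "proper i (Arr A B) = ((proper i A \<and> proper i B) \<or> top_variant B)"
| "proper i (Mu A) = (proper (Suc i) A \<or> top_variant (Mu A))"

text \<open>Type expressions.\<close>
inductive wfty :: "ty \<Rightarrow> bool" where
  "wfty (TVar i)"
| "wfty A \<Longrightarrow> wfty B \<Longrightarrow> wfty (Arr A B)"
| "wfty A \<Longrightarrow> wfty (Later A)"
| "wfty A \<Longrightarrow> proper 0 A \<Longrightarrow> wfty (Mu A)"

text \<open>Equality relations; dist = False gives \<cong>, dist = True gives \<simeq>.
  subst 0 A (Mu A) is A[mu X.A/X];  subst 0 C A is C[A/X] for mu X.C = Mu C.\<close>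
inductive teq :: "bool \<Rightarrow> ty \<Rightarrow> ty \<Rightarrow> bool" for dist :: bool where
  refl: "wfty A \<Longrightarrow> teq dist A A"
| sym: "teq dist A B \<Longrightarrow> teq dist B A"
| trans: "teq dist A B \<Longrightarrow> teq dist B C \<Longrightarrow> teq dist A C"
| later: "teq dist A B \<Longrightarrow> teq dist (Later A) (Later B)"
| arr: "teq dist A C \<Longrightarrow> teq dist B D \<Longrightarrow> teq dist (Arr A B) (Arr C D)"
| arr_top: "wfty A \<Longrightarrow> teq dist (Arr A top) top"
| unfold: "wfty (Mu A) \<Longrightarrow> teq dist (Mu A) (subst 0 A (Mu A))"
| fold: "teq dist A (subst 0 C A) \<Longrightarrow> wfty (Mu C) \<Longrightarrow> teq dist A (Mu C)"
| distr: "dist \<Longrightarrow> wfty A \<Longrightarrow> wfty B \<Longrightarrow>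
          teq dist (Later (Arr A B)) (Arr (Later A) (Later B))"

definition tcong :: "ty \<Rightarrow> ty \<Rightarrow> bool" where "tcong = teq False"
definition tsimeq :: "ty \<Rightarrow> ty \<Rightarrow> bool" where "tsimeq = teq True"

end

theory Submission
  imports Defs
begin

text \<open>The backward implications are instances of the congruence rules and of
  A \<rightarrow> top \<cong> top.  For injectivity of the bullet we use a formal inverse of it, unlater,
  which sends \<bullet>A to A, commutes with arrows and is compatible with substitution and
  unfolding, so that it respects every rule of both equalities.  For arrows we look at heads:
  unfolding the outer binders of a type reaches, under n bullets, a variable or an arrow, or
  nothing at all for contractive types such as top.  Equal types have compatible heads, an
  invariant checked rule by rule; in the fold case, if the fixed point \<mu>X.C has no head, the
  head of A reappears in C[A/X] under at least one bullet, which forces it to be top by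
  uniqueness of guarded fixed points.
  For two arrow types compatibility of their heads is exactly the right-hand side of (2).\<close>

section \<open>Parallel substitution\<close>

definition up :: "(nat \<Rightarrow> ty) \<Rightarrow> nat \<Rightarrow> ty" where
  "up \<sigma> = (\<lambda>j. case j of 0 \<Rightarrow> TVar 0 | Suc i \<Rightarrow> lift 0 (\<sigma> i))"

fun psubst :: "(nat \<Rightarrow> ty) \<Rightarrow> ty \<Rightarrow> ty" where
  "psubst \<sigma> (TVar i) = \<sigma> i"
| "psubst \<sigma> (Arr A B) = Arr (psubst \<sigma> A) (psubst \<sigma> B)"
| "psubst \<sigma> (Later A) = Later (psubst \<sigma> A)"
| psubst_Mu: "psubst \<sigma> (Mu A) = Mu (psubst (up \<sigma>) A)"

lemma up_0 [simp]: "up \<sigma> 0 = TVar 0"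
  and up_Suc [simp]: "up \<sigma> (Suc i) = lift 0 (\<sigma> i)"
  by (simp_all add: up_def)

lemma psubst_cong: "(\<And>i. \<sigma> i = \<tau> i) \<Longrightarrow> psubst \<sigma> A = psubst \<tau> A"
  by (metis ext)

definition lift_var :: "nat \<Rightarrow> nat \<Rightarrow> ty" where
  "lift_var k i = TVar (if i < k then i else Suc i)"

lemma up_lift_var: "up (lift_var k) = lift_var (Suc k)"
  by (rule ext) (auto simp: up_def lift_var_def split: nat.splits)

lemma lift_eq_psubst: "lift k A = psubst (lift_var k) A"
  by (induction A arbitrary: k) (auto simp: lift_var_def up_lift_var)

lemma lift0_eq_psubst: "lift 0 A = psubst (\<lambda>i. TVar (Suc i)) A"
  unfolding lift_eq_psubst by (rule psubst_cong) (simp add: lift_var_def)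

definition subst_var :: "nat \<Rightarrow> ty \<Rightarrow> nat \<Rightarrow> ty" where
  "subst_var k s i = (if i < k then TVar i else if i = k then s else TVar (i - 1))"

lemma up_subst_var: "up (subst_var k s) = subst_var (Suc k) (lift 0 s)"
  by (rule ext) (auto simp: up_def subst_var_def lift_eq_psubst lift_var_def split: nat.splits)

lemma subst_eq_psubst: "subst k A s = psubst (subst_var k s) A"
  by (induction A arbitrary: k s) (auto simp: subst_var_def up_subst_var)

lemma up_renaming:
  "up (\<lambda>i. TVar (r i)) = (\<lambda>j. TVar (case j of 0 \<Rightarrow> 0 | Suc i \<Rightarrow> Suc (r i)))"
  by (rule ext) (auto simp: up_def lift0_eq_psubst split: nat.splits)

lemma psubst_renaming: "psubst \<sigma> (psubst (\<lambda>i. TVar (r i)) A) = psubst (\<lambda>i. \<sigma> (r i)) A"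
proof (induction A arbitrary: \<sigma> r)
  case (Mu A)
  have "up \<sigma> (case j of 0 \<Rightarrow> 0 | Suc i \<Rightarrow> Suc (r i)) = up (\<lambda>i. \<sigma> (r i)) j" for j
    by (cases j) auto
  then show ?case using Mu by (simp add: up_renaming)
qed auto

lemma renaming_psubst:
  "psubst (\<lambda>i. TVar (r i)) (psubst \<sigma> A) = psubst (\<lambda>i. psubst (\<lambda>i. TVar (r i)) (\<sigma> i)) A"
proof (induction A arbitrary: \<sigma> r)
  case (Mu A)
  have "psubst (\<lambda>j. TVar (case j of 0 \<Rightarrow> 0 | Suc i \<Rightarrow> Suc (r i))) (up \<sigma> j) =
        up (\<lambda>i. psubst (\<lambda>i. TVar (r i)) (\<sigma> i)) j" for j
    by (cases j) (auto simp: lift0_eq_psubst psubst_renaming)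
  then show ?case using Mu by (simp add: up_renaming)
qed auto

lemma psubst_psubst: "psubst \<sigma> (psubst \<tau> A) = psubst (\<lambda>i. psubst \<sigma> (\<tau> i)) A"
proof (induction A arbitrary: \<sigma> \<tau>)
  case (Mu A)
  have "psubst (up \<sigma>) (up \<tau> j) = up (\<lambda>i. psubst \<sigma> (\<tau> i)) j" for j
    by (cases j) (auto simp: lift0_eq_psubst psubst_renaming renaming_psubst)
  then show ?case using Mu by simp
qed auto

lemma psubst_TVar [simp]: "psubst TVar A = A"
proof -
  have "up TVar = TVar" by (rule ext) (auto simp: up_def split: nat.splits)
  then show ?thesis by (induction A) auto
qed

lemma psubst_subst_var_lift0: "psubst (subst_var 0 s) (lift 0 X) = X"
  by (simp add: lift0_eq_psubst psubst_renaming subst_var_def)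

lemma psubst_subst0:
  "psubst \<sigma> (subst 0 A B) = subst 0 (psubst (up \<sigma>) A) (psubst \<sigma> B)"
  unfolding subst_eq_psubst psubst_psubst
proof (rule psubst_cong)
  fix i show "psubst \<sigma> (subst_var 0 B i) = psubst (subst_var 0 (psubst \<sigma> B)) (up \<sigma> i)"
    by (cases i) (auto simp: subst_var_def psubst_subst_var_lift0)
qed

lemma psubst_top [simp]: "psubst \<sigma> top = top"
  by (simp add: top_def)

section \<open>Tails, top-variants and properness\<close>

text \<open>The end of the tail of a type: either a free variable i under c bullets (counted
  through the enclosing binders), or a variable bound inside the tail, flagged by whether
  it is guarded by a bullet, that is, whether the type is a top-variant.\<close>

datatype endpoint = Closed bool | Open nat nat

fun tail_end :: "ty \<Rightarrow> endpoint" where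
  "tail_end (TVar i) = Open i 0"
| "tail_end (Later A) = (case tail_end A of Open i c \<Rightarrow> Open i (Suc c) | e \<Rightarrow> e)"
| "tail_end (Mu A) = (case tail_end A of
     Open 0 c \<Rightarrow> Closed (1 \<le> c) | Open (Suc i) c \<Rightarrow> Open i c | e \<Rightarrow> e)"
| "tail_end (Arr A B) = tail_end B"

lemma tv_tail_iff:
  "tv ms (tail Y) \<longleftrightarrow>
     tail_end Y = Closed True \<or> (\<exists>i c. tail_end Y = Open i c \<and> i < length ms \<and> 1 \<le> ms ! i + c)"
  by (induction Y arbitrary: ms) (auto split: endpoint.splits nat.splits simp: nth_Cons')

lemma top_variant_iff_tail_end: "top_variant Y \<longleftrightarrow> tail_end Y = Closed True"
  unfolding top_variant_def by (simp add: tv_tail_iff)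

fun add_laters :: "nat \<Rightarrow> endpoint \<Rightarrow> endpoint" where
  "add_laters c (Open j c') = Open j (c + c')"
| "add_laters c (Closed b) = Closed b"

lemma tail_end_renaming:
  "tail_end (psubst (\<lambda>i. TVar (r i)) X) = (case tail_end X of Open i c \<Rightarrow> Open (r i) c | e \<Rightarrow> e)"
  by (induction X arbitrary: r) (auto simp: up_renaming split: endpoint.splits nat.splits)

lemma tail_end_psubst:
  "tail_end (psubst \<sigma> X) = (case tail_end X of Open i c \<Rightarrow> add_laters c (tail_end (\<sigma> i)) | e \<Rightarrow> e)"
proof (induction X arbitrary: \<sigma>)
  case (TVar x)
  then show ?case by (cases "tail_end (\<sigma> x)") auto
next
  case (Later X)
  then show ?case
    by (cases "tail_end X"; cases "tail_end (\<sigma> (case tail_end X of Open i c \<Rightarrow> i))")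
      (auto split: endpoint.splits)
next
  case (Mu X)
  then show ?case
    by (auto split: endpoint.splits nat.splits simp: lift0_eq_psubst tail_end_renaming)
qed auto

lemma top_variant_psubst: "top_variant X \<Longrightarrow> top_variant (psubst \<sigma> X)"
  by (simp add: top_variant_iff_tail_end tail_end_psubst)

lemma top_variant_lift: "top_variant X \<Longrightarrow> top_variant (lift k X)"
  by (simp add: lift_eq_psubst top_variant_psubst)

lemma proper_lift: "proper i X \<Longrightarrow> proper (if i < k then i else Suc i) (lift k X)"
proof (induction X arbitrary: i k)
  case (Arr X1 X2)
  then show ?case using top_variant_lift by (cases "top_variant X2") auto
next
  case (Mu X)
  have "top_variant (Mu X) \<Longrightarrow> top_variant (Mu (lift (Suc k) X))"
    using top_variant_lift[of "Mu X" k] by simp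
  moreover have "proper (Suc i) X \<Longrightarrow> proper (if i < k then Suc i else Suc (Suc i)) (lift (Suc k) X)"
    using Mu.IH[of "Suc i" "Suc k"] by simp
  ultimately show ?case using Mu.prems by (auto split: if_splits)
qed auto

lemma proper_lift_self: "proper k (lift k X)"
  by (induction X arbitrary: k) auto

lemma proper_psubst:
  assumes "proper i X" and "\<sigma> i = TVar i'" and "\<And>j. j \<noteq> i \<Longrightarrow> proper i' (\<sigma> j)"
  shows "proper i' (psubst \<sigma> X)"
  using assms
proof (induction X arbitrary: i i' \<sigma>)
  case (Arr X1 X2)
  then show ?case using top_variant_psubst by auto
next
  case (Mu X)
  show ?case
  proof (cases "proper (Suc i) X")
    case True
    have "proper (Suc i') (up \<sigma> j)" if "j \<noteq> Suc i" for j
      using that Mu.prems proper_lift[of i' "\<sigma> (j - 1)" 0] by (cases j) auto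
    then show ?thesis using Mu.IH[OF True, of "up \<sigma>" "Suc i'"] Mu.prems by auto
  next
    case False
    then have "top_variant (Mu X)" using Mu.prems by simp
    then show ?thesis using top_variant_psubst[of "Mu X" \<sigma>] by simp
  qed
qed auto

section \<open>Well-formedness\<close>

lemma wfty_lift: "wfty X \<Longrightarrow> wfty (lift k X)"
proof (induction X arbitrary: k rule: wfty.induct)
  case (4 A)
  then show ?case using proper_lift[of 0 A "Suc k"] by (auto intro: wfty.intros)
qed (auto intro: wfty.intros)

lemma wfty_psubst: "wfty X \<Longrightarrow> (\<And>i. wfty (\<sigma> i)) \<Longrightarrow> wfty (psubst \<sigma> X)"
proof (induction X arbitrary: \<sigma> rule: wfty.induct)
  case (4 A)
  have "wfty (up \<sigma> j)" for j
    using 4 by (cases j) (auto intro: wfty.intros wfty_lift)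
  moreover have "proper 0 (up \<sigma> j)" if "j \<noteq> 0" for j
    using that proper_lift_self[of 0] by (cases j) auto
  then have "proper 0 (psubst (up \<sigma>) A)"
    using proper_psubst[OF 4(2)] by simp
  ultimately show ?case using 4 by (auto intro: wfty.intros)
qed (auto intro: wfty.intros)

lemma wfty_subst_var: "wfty s \<Longrightarrow> wfty (subst_var k s i)"
  by (auto simp: subst_var_def intro: wfty.intros)

lemma wfty_subst: "wfty X \<Longrightarrow> wfty s \<Longrightarrow> wfty (subst k X s)"
  unfolding subst_eq_psubst by (rule wfty_psubst) (auto intro: wfty_subst_var)

lemma wfty_unfold: "wfty (Mu A) \<Longrightarrow> wfty (subst 0 A (Mu A))"
  by (auto intro: wfty_subst elim: wfty.cases)

lemma wfty_top [simp]: "wfty top"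
  unfolding top_def by (auto intro!: wfty.intros)

lemma teq_wfty: "teq d X Y \<Longrightarrow> wfty X \<and> wfty Y"
  by (induction rule: teq.induct) (auto intro: wfty.intros wfty_unfold)

section \<open>Equality under substitution\<close>

lemma teq_psubst: "teq d X Y \<Longrightarrow> (\<And>i. wfty (\<sigma> i)) \<Longrightarrow> teq d (psubst \<sigma> X) (psubst \<sigma> Y)"
proof (induction arbitrary: \<sigma> rule: teq.induct)
  case (unfold A)
  have "wfty (psubst \<sigma> (Mu A))" using unfold by (intro wfty_psubst)
  then show ?case by (simp add: psubst_subst0 teq.unfold)
next
  case (fold A C)
  have "wfty (psubst \<sigma> (Mu C))" using fold by (intro wfty_psubst)
  moreover have "teq d (psubst \<sigma> A) (subst 0 (psubst (up \<sigma>) C) (psubst \<sigma> A))"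
    using fold psubst_subst0 by metis
  ultimately show ?case by (auto intro: teq.fold)
qed (auto intro: teq.intros wfty_psubst)

lemma teq_lift: "teq d X Y \<Longrightarrow> teq d (lift k X) (lift k Y)"
  unfolding lift_eq_psubst by (rule teq_psubst) (auto simp: lift_var_def intro: wfty.intros)

lemma teq_subst: "teq d X Y \<Longrightarrow> wfty s \<Longrightarrow> teq d (subst k X s) (subst k Y s)"
  unfolding subst_eq_psubst by (rule teq_psubst) (auto intro: wfty_subst_var)

lemma teq_Mu: "teq d B B' \<Longrightarrow> wfty (Mu B) \<Longrightarrow> wfty (Mu B') \<Longrightarrow> teq d (Mu B) (Mu B')"
  by (metis teq.fold teq.trans teq.unfold teq_subst)

lemma teq_psubst_cong:
  "wfty X \<Longrightarrow> (\<And>i. teq d (\<sigma> i) (\<sigma>' i)) \<Longrightarrow> teq d (psubst \<sigma> X) (psubst \<sigma>' X)"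
proof (induction X arbitrary: \<sigma> \<sigma>' rule: wfty.induct)
  case (4 A)
  have "wfty (\<sigma> i)" "wfty (\<sigma>' i)" for i using 4 teq_wfty by blast+
  then have "wfty (psubst \<sigma> (Mu A))" "wfty (psubst \<sigma>' (Mu A))"
    using 4 by (metis wfty.intros(4) wfty_psubst)+
  moreover have "teq d (up \<sigma> j) (up \<sigma>' j)" for j
    using 4 by (cases j) (auto intro: teq_lift teq.refl wfty.intros)
  then have "teq d (psubst (up \<sigma>) A) (psubst (up \<sigma>') A)" using 4 by blast
  ultimately show ?case by (auto intro: teq_Mu)
qed (auto intro: teq.intros)

lemma teq_subst_cong: "wfty P \<Longrightarrow> teq d X Y \<Longrightarrow> teq d (subst k P X) (subst k P Y)"
  unfolding subst_eq_psubst
  by (rule teq_psubst_cong) (auto simp: subst_var_def intro: teq.refl wfty.intros)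

abbreviation laters :: "nat \<Rightarrow> ty \<Rightarrow> ty" where "laters n X \<equiv> (Later ^^ n) X"

lemma wfty_laters: "wfty X \<Longrightarrow> wfty (laters n X)"
  by (induction n) (auto intro: wfty.intros)

lemma teq_laters: "teq d X Y \<Longrightarrow> teq d (laters n X) (laters n Y)"
  by (induction n) (auto intro: teq.later)

lemma teq_Later_top: "teq d (Later top) top"
proof -
  have "teq d top (subst 0 (Later (TVar 0)) top)"
    using teq.unfold[of "Later (TVar 0)" d] wfty_top by (simp add: top_def)
  then show ?thesis by (simp add: top_def teq.sym)
qed

lemma teq_Later_topI: "teq d X top \<Longrightarrow> teq d (Later X) top"
  using teq.later teq_Later_top teq.trans by blast

lemma teq_laters_top: "teq d (laters n top) top"
  by (induction n) (auto intro: teq.refl teq_Later_topI)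

text \<open>X and top both solve the guarded equation Y = laters k Y, whose solutions are all equal
  to its fixed point by rule fold.\<close>

lemma teq_top_if_fixed_by_laters:
  assumes "teq d X (laters k X)" and "1 \<le> k"
  shows "teq d X top"
proof -
  have subst_laters: "subst 0 (laters k (TVar 0)) Y = laters k Y" for Y
    by (induction k) auto
  have w: "wfty (Mu (laters k (TVar 0)))"
    using assms(2) by (cases k) (auto intro!: wfty.intros wfty_laters)
  have "teq d X (Mu (laters k (TVar 0)))"
    using assms w by (auto intro: teq.fold simp: subst_laters)
  moreover have "teq d top (Mu (laters k (TVar 0)))"
    using teq_laters_top teq.sym w by (metis teq.fold subst_laters)
  ultimately show ?thesis by (blast intro: teq.trans teq.sym)
qed

section \<open>Heads\<close>

text \<open>HVar n i and HArr n P Q stand for the variable i and the arrow P \<rightarrow> Q under n bullets,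
  as reached by unfolding the outer binders of a type.\<close>

datatype head = HVar nat nat | HArr nat ty ty

fun head_later :: "nat \<Rightarrow> head \<Rightarrow> head" where
  "head_later k (HVar n i) = HVar (n + k) i"
| "head_later k (HArr n P Q) = HArr (n + k) P Q"

lemma head_later_0 [simp]: "head_later 0 h = h"
  by (cases h) auto

lemma head_later_head_later [simp]: "head_later a (head_later b h) = head_later (b + a) h"
  by (cases h) auto

lemma head_later_eq_iff [simp]: "head_later k h = h \<longleftrightarrow> k = 0" "h = head_later k h \<longleftrightarrow> k = 0"
  by (cases h; auto)+

inductive has_head :: "ty \<Rightarrow> head \<Rightarrow> bool" where
  TVar: "has_head (TVar i) (HVar 0 i)"
| Arr: "has_head (Arr A B) (HArr 0 A B)"
| Later: "has_head A h \<Longrightarrow> has_head (Later A) (head_later (Suc 0) h)"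
| Mu: "has_head (subst 0 A (Mu A)) h \<Longrightarrow> has_head (Mu A) h"

inductive_cases has_head_TVarE: "has_head (TVar i) h"
inductive_cases has_head_ArrE: "has_head (Arr A B) h"
inductive_cases has_head_LaterE: "has_head (Later A) h"
inductive_cases has_head_MuE: "has_head (Mu A) h"

lemma has_head_TVar_iff [simp]: "has_head (TVar i) h \<longleftrightarrow> h = HVar 0 i"
  by (metis has_head_TVarE has_head.TVar)

lemma has_head_Arr_iff [simp]: "has_head (Arr A B) h \<longleftrightarrow> h = HArr 0 A B"
  by (metis has_head_ArrE has_head.Arr)

lemma has_head_Later_iff: "has_head (Later A) h \<longleftrightarrow> (\<exists>h0. has_head A h0 \<and> h = head_later (Suc 0) h0)"
  by (auto elim: has_head_LaterE intro: has_head.Later)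

lemma has_head_Mu_iff: "has_head (Mu A) h \<longleftrightarrow> has_head (subst 0 A (Mu A)) h"
  by (auto elim: has_head_MuE intro: has_head.Mu)

lemma has_head_unique: "has_head X h1 \<Longrightarrow> has_head X h2 \<Longrightarrow> h1 = h2"
proof (induction arbitrary: h2 rule: has_head.induct)
  case (Later A h)
  from Later.prems obtain h0 where "has_head A h0" "h2 = head_later (Suc 0) h0"
    by (rule has_head_LaterE)
  then show ?case using Later.IH by simp
next
  case (Mu A h)
  then show ?case by (simp add: has_head_Mu_iff)
qed auto

lemma has_head_top: "\<not> has_head top h"
proof
  assume "has_head top h"
  then show False
  proof (induction "top" h rule: has_head.induct)
    case (Mu A h)
    then have "has_head (Later top) h" by (simp add: top_def)
    then obtain h0 where "has_head top h0" "h = head_later (Suc 0) h0"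
      by (auto simp: has_head_Later_iff)
    then show False using Mu has_head_unique[of top h h0] has_head.Mu[OF Mu.hyps(1)]
      by (auto simp: top_def)
  qed (auto simp: top_def)
qed

fun wf_head :: "head \<Rightarrow> bool" where
  "wf_head (HVar n i) = True"
| "wf_head (HArr n P Q) = (wfty P \<and> wfty Q)"

lemma wf_head_if_has_head: "has_head X h \<Longrightarrow> wfty X \<Longrightarrow> wf_head h"
proof (induction rule: has_head.induct)
  case (Later A h)
  then show ?case by (cases h) (auto elim: wfty.cases)
qed (auto intro: wfty_unfold elim: wfty.cases)

lemma has_head_psubst:
  "has_head C h \<Longrightarrow> (case h of
      HArr n P Q \<Rightarrow> has_head (psubst \<sigma> C) (HArr n (psubst \<sigma> P) (psubst \<sigma> Q))
    | HVar n i \<Rightarrow> (\<forall>h'. has_head (\<sigma> i) h' \<longrightarrow> has_head (psubst \<sigma> C) (head_later n h')))"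
proof (induction arbitrary: \<sigma> rule: has_head.induct)
  case (Later A h)
  then show ?case
    by (cases h) (auto intro: has_head.Later[of _ "head_later _ _", simplified]
        has_head.Later[of _ "HArr _ _ _", simplified])
next
  case (Mu A h)
  then show ?case by (cases h) (auto intro: has_head.Mu simp: psubst_subst0)
qed auto

lemma has_head_psubst_HArr:
  "has_head C (HArr n P Q) \<Longrightarrow> has_head (psubst \<sigma> C) (HArr n (psubst \<sigma> P) (psubst \<sigma> Q))"
  using has_head_psubst[of C "HArr n P Q" \<sigma>] by simp

lemma has_head_psubst_HVar:
  "has_head C (HVar n i) \<Longrightarrow> has_head (\<sigma> i) h \<Longrightarrow> has_head (psubst \<sigma> C) (head_later n h)"
  using has_head_psubst[of C "HVar n i" \<sigma>] by simp

lemma has_head_psubst_inv: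
  "has_head X h \<Longrightarrow> X = psubst \<sigma> C \<Longrightarrow>
    (\<exists>n P Q. has_head C (HArr n P Q) \<and> h = HArr n (psubst \<sigma> P) (psubst \<sigma> Q)) \<or>
    (\<exists>n i h'. has_head C (HVar n i) \<and> has_head (\<sigma> i) h' \<and> h = head_later n h')"
proof (induction arbitrary: C rule: has_head.induct)
  case (TVar i)
  then show ?case by (cases C) (auto, metis has_head.TVar)
next
  case (Arr A B)
  then show ?case by (cases C) (auto, metis has_head.Arr)
next
  case (Later A h)
  show ?case
  proof (cases C)
    case (TVar j)
    then show ?thesis using Later has_head.Later[OF Later.hyps] by auto
  next
    case (Later C')
    with Later.prems have "A = psubst \<sigma> C'" by simp
    from Later.IH[OF this] show ?thesis
    proof (elim disjE exE conjE)
      fix n P Q assume "has_head C' (HArr n P Q)" "h = HArr n (psubst \<sigma> P) (psubst \<sigma> Q)"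
      then show ?thesis using Later has_head.Later[of C' "HArr n P Q"] by auto
    next
      fix n i h' assume "has_head C' (HVar n i)" "has_head (\<sigma> i) h'" "h = head_later n h'"
      then show ?thesis using Later has_head.Later[of C' "HVar n i"]
        by (intro disjI2 exI[of _ "Suc n"] exI[of _ i] exI[of _ h']) auto
    qed
  qed (use Later.prems in simp_all)
next
  case (Mu A h)
  show ?case
  proof (cases C)
    case (TVar j)
    then show ?thesis using Mu.prems has_head.Mu[OF Mu.hyps] by auto
  next
    case (Mu C')
    then have "subst 0 A (Mu A) = psubst \<sigma> (subst 0 C' (Mu C'))"
      using Mu.prems by (simp add: psubst_subst0)
    from Mu.IH[OF this] show ?thesis using Mu has_head.Mu[of C'] by blast
  qed (use Mu.prems in simp_all)
qed

lemma has_head_psubst_cases: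
  assumes "has_head (psubst \<sigma> C) h"
  obtains n P Q where "has_head C (HArr n P Q)" "h = HArr n (psubst \<sigma> P) (psubst \<sigma> Q)"
  | n i h' where "has_head C (HVar n i)" "has_head (\<sigma> i) h'" "h = head_later n h'"
  using has_head_psubst_inv[OF assms HOL.refl] by blast

lemma has_head_HVar_tail_end:
  "wfty C \<Longrightarrow> has_head C (HVar j m) \<Longrightarrow> tail_end C = Open m j \<and> (j = 0 \<longrightarrow> \<not> proper m C)"
proof (induction C arbitrary: j m)
  case (Later C)
  then obtain h0 where "has_head C h0" "HVar j m = head_later (Suc 0) h0"
    by (auto simp: has_head_Later_iff)
  moreover then obtain j' where "h0 = HVar j' m" "j = Suc j'" by (cases h0) auto
  moreover have "wfty C" using Later.prems by (auto elim: wfty.cases)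
  ultimately show ?case using Later.IH by auto
next
  case (Mu C)
  have wC: "wfty C" "proper 0 C" using Mu.prems by (auto elim: wfty.cases)
  have "has_head (psubst (subst_var 0 (Mu C)) C) (HVar j m)"
    using Mu.prems by (simp add: has_head_Mu_iff subst_eq_psubst)
  then obtain n i h' where hC: "has_head C (HVar n i)"
      and h': "has_head (subst_var 0 (Mu C) i) h'" and e: "HVar j m = head_later n h'"
    by (rule has_head_psubst_cases) auto
  show ?case
  proof (cases i)
    case 0
    with Mu.IH[OF wC(1) hC] wC have "n \<noteq> 0" by auto
    moreover from 0 h' have "has_head (Mu C) h'" by (simp add: subst_var_def)
    with Mu.prems have "h' = HVar j m" using has_head_unique by blast
    ultimately show ?thesis using e by simp
  next
    case (Suc i')
    with h' e have "j = n" "m = i'" by (auto simp: subst_var_def)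
    with Mu.IH[OF wC(1) hC] Suc have "tail_end C = Open (Suc m) j" "j = 0 \<longrightarrow> \<not> proper (Suc m) C"
      by auto
    moreover then have "\<not> top_variant (Mu C)" by (simp add: top_variant_iff_tail_end)
    ultimately show ?thesis by simp
  qed
qed auto

lemma has_head_HVar_guarded: "wfty C \<Longrightarrow> proper i C \<Longrightarrow> has_head C (HVar n i) \<Longrightarrow> n \<noteq> 0"
  using has_head_HVar_tail_end by blast

lemma has_head_subst0_cases:
  assumes "has_head (subst 0 C X) h" "wfty C" "proper 0 C"
  obtains n P Q where "has_head C (HArr n P Q)" "h = HArr n (subst 0 P X) (subst 0 Q X)"
  | n i where "has_head C (HVar n (Suc i))" "h = HVar n i"
  | n h' where "n \<noteq> 0" "has_head C (HVar n 0)" "has_head X h'" "h = head_later n h'"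
proof -
  from assms(1) have "has_head (psubst (subst_var 0 X) C) h" by (simp add: subst_eq_psubst)
  then show thesis
  proof (cases rule: has_head_psubst_cases)
    case (1 n P Q)
    then show thesis using that(1) by (simp add: subst_eq_psubst)
  next
    case (2 n i h')
    then show thesis using that(2,3) has_head_HVar_guarded[OF assms(2,3)]
      by (cases i) (auto simp: subst_var_def)
  qed
qed

lemma has_head_subst0_HArr:
  "has_head C (HArr n P Q) \<Longrightarrow> has_head (subst 0 C X) (HArr n (subst 0 P X) (subst 0 Q X))"
  by (simp add: subst_eq_psubst has_head_psubst_HArr)

lemma has_head_subst0_HVar:
  "has_head C (HVar n (Suc i)) \<Longrightarrow> has_head (subst 0 C X) (HVar n i)"
  using has_head_psubst_HVar[of C n "Suc i" "subst_var 0 X" "HVar 0 i"]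
  by (simp add: subst_eq_psubst subst_var_def)

section \<open>Equal types have compatible heads\<close>

text \<open>For the distributive equality bullets are pushed into the components of an arrow
  head; for the plain one, bullet prefixes of arrow heads must agree unless both targets
  are top.\<close>

fun heads_compat :: "bool \<Rightarrow> head \<Rightarrow> head \<Rightarrow> bool" where
  "heads_compat d (HVar n i) (HVar m j) = (n = m \<and> i = j)"
| "heads_compat True (HArr n P Q) (HArr m R S) =
     ((teq True (laters n P) (laters m R) \<and> teq True (laters n Q) (laters m S)) \<or>
      (teq True (laters n Q) (laters m S) \<and> teq True (laters m S) top))"
| "heads_compat False (HArr n P Q) (HArr m R S) =
     (if n = m then (teq False P R \<and> teq False Q S) \<or> (teq False Q S \<and> teq False S top)
      else teq False Q top \<and> teq False S top)"
| "heads_compat d (HVar n i) (HArr m R S) = False"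
| "heads_compat d (HArr n P Q) (HVar m j) = False"

fun top_head :: "bool \<Rightarrow> head \<Rightarrow> bool" where
  "top_head d (HVar n i) = False"
| "top_head True (HArr n P Q) = teq True (laters n Q) top"
| "top_head False (HArr n P Q) = teq False Q top"

fun head_teq :: "bool \<Rightarrow> head \<Rightarrow> head \<Rightarrow> bool" where
  "head_teq d (HVar n i) (HVar m j) = (n = m \<and> i = j)"
| "head_teq d (HArr n P Q) (HArr m R S) = (n = m \<and> teq d P R \<and> teq d Q S)"
| "head_teq d _ _ = False"

lemmas teq_trans_sym = teq.trans teq.sym

lemma heads_compat_refl: "wf_head h \<Longrightarrow> heads_compat d h h"
  by (cases h; cases d) (auto intro: teq.refl wfty_laters)

lemma heads_compat_sym: "heads_compat d h1 h2 \<Longrightarrow> heads_compat d h2 h1"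
  by (cases h1; cases h2; cases d) (auto split: if_splits intro: teq_trans_sym)

lemma heads_compat_trans:
  "heads_compat d h1 h2 \<Longrightarrow> heads_compat d h2 h3 \<Longrightarrow> heads_compat d h1 h3"
proof (cases h1; cases h2; cases h3; cases d)
  fix n1 P Q n2 R S n3 T U
  assume e: "h1 = HArr n1 P Q" "h2 = HArr n2 R S" "h3 = HArr n3 T U"
  { assume "d" "heads_compat d h1 h2" "heads_compat d h2 h3"
    then show "heads_compat d h1 h3" using e by simp (meson teq_trans_sym) }
  { assume "\<not> d" "heads_compat d h1 h2" "heads_compat d h2 h3"
    then show "heads_compat d h1 h3" using e by (simp split: if_splits) (meson teq_trans_sym)+ }
qed auto

lemma heads_compat_head_teq:
  "heads_compat d h1 h2 \<Longrightarrow> head_teq d h2 h3 \<Longrightarrow> heads_compat d h1 h3"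
proof (cases h1; cases h2; cases h3; cases d)
  fix n1 P Q n2 R S n3 T U
  assume e: "h1 = HArr n1 P Q" "h2 = HArr n2 R S" "h3 = HArr n3 T U"
  { assume "d" "heads_compat d h1 h2" "head_teq d h2 h3"
    moreover then have "teq True (laters n2 R) (laters n2 T)" "teq True (laters n2 S) (laters n2 U)"
      using e by (auto intro: teq_laters)
    ultimately show "heads_compat d h1 h3" using e by simp (meson teq_trans_sym) }
  { assume "\<not> d" "heads_compat d h1 h2" "head_teq d h2 h3"
    then show "heads_compat d h1 h3" using e by (simp split: if_splits) (meson teq_trans_sym)+ }
qed auto

lemma heads_compat_Later:
  "heads_compat d h1 h2 \<Longrightarrow> heads_compat d (head_later (Suc 0) h1) (head_later (Suc 0) h2)"
  by (cases h1; cases h2; cases d) (auto intro: teq.later teq_Later_topI)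

lemma top_head_if_heads_compat: "heads_compat d h1 h2 \<Longrightarrow> top_head d h2 \<Longrightarrow> top_head d h1"
  by (cases h1; cases h2; cases d) (auto split: if_splits intro: teq_trans_sym)

lemma heads_compat_if_top_heads: "top_head d h1 \<Longrightarrow> top_head d h2 \<Longrightarrow> heads_compat d h1 h2"
  by (cases h1; cases h2; cases d) (auto split: if_splits intro: teq_trans_sym)

lemma top_head_head_teq: "top_head d h2 \<Longrightarrow> head_teq d h2 h3 \<Longrightarrow> top_head d h3"
proof (cases h2; cases h3; cases d)
  fix n2 R S n3 T U
  assume e: "h2 = HArr n2 R S" "h3 = HArr n3 T U"
  { assume "d" "top_head d h2" "head_teq d h2 h3"
    moreover then have "teq True (laters n2 S) (laters n2 U)" using e by (auto intro: teq_laters)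
    ultimately show "top_head d h3" using e by simp (meson teq_trans_sym) }
  { assume "\<not> d" "top_head d h2" "head_teq d h2 h3"
    then show "top_head d h3" using e by simp (meson teq_trans_sym) }
qed auto

lemma top_head_Later: "top_head d h \<Longrightarrow> top_head d (head_later (Suc 0) h)"
  by (cases h; cases d) (auto intro: teq_Later_topI)

lemma top_head_if_compat_head_later:
  assumes "heads_compat d h (head_later k h)" and "1 \<le> k"
  shows "top_head d h"
proof (cases h)
  case (HArr n P Q)
  show ?thesis
  proof (cases d)
    case True
    then have "teq True (laters n Q) (laters k (laters n Q))"
      using assms HArr by (auto simp: funpow_add add.commute)
    then show ?thesis using True HArr assms(2) teq_top_if_fixed_by_laters by auto
  qed (use assms HArr in auto)
qed (use assms in auto)

definition head_inv :: "bool \<Rightarrow> ty \<Rightarrow> ty \<Rightarrow> bool" where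
  "head_inv d X Y \<longleftrightarrow>
     (\<forall>h1 h2. has_head X h1 \<longrightarrow> has_head Y h2 \<longrightarrow> heads_compat d h1 h2) \<and>
     (\<forall>h1. has_head X h1 \<longrightarrow> (\<forall>h2. \<not> has_head Y h2) \<longrightarrow> top_head d h1) \<and>
     (\<forall>h2. has_head Y h2 \<longrightarrow> (\<forall>h1. \<not> has_head X h1) \<longrightarrow> top_head d h2)"

lemma head_invI:
  assumes "\<And>h1 h2. has_head X h1 \<Longrightarrow> has_head Y h2 \<Longrightarrow> heads_compat d h1 h2"
    and "\<And>h1. has_head X h1 \<Longrightarrow> \<forall>h2. \<not> has_head Y h2 \<Longrightarrow> top_head d h1"
    and "\<And>h2. has_head Y h2 \<Longrightarrow> \<forall>h1. \<not> has_head X h1 \<Longrightarrow> top_head d h2"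
  shows "head_inv d X Y"
  using assms unfolding head_inv_def by blast

lemma head_invD:
  assumes "head_inv d X Y"
  shows "has_head X h1 \<Longrightarrow> has_head Y h2 \<Longrightarrow> heads_compat d h1 h2"
    and "has_head X h1 \<Longrightarrow> \<forall>h2. \<not> has_head Y h2 \<Longrightarrow> top_head d h1"
    and "has_head Y h2 \<Longrightarrow> \<forall>h1. \<not> has_head X h1 \<Longrightarrow> top_head d h2"
  using assms unfolding head_inv_def by blast+

lemma head_inv_refl: "wfty X \<Longrightarrow> head_inv d X X"
  by (rule head_invI) (metis has_head_unique wf_head_if_has_head heads_compat_refl, blast+)

lemma head_inv_sym: "head_inv d X Y \<Longrightarrow> head_inv d Y X"
  by (rule head_invI) (auto dest: head_invD intro: heads_compat_sym)

lemma head_inv_trans: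
  assumes XY: "head_inv d X Y" and YZ: "head_inv d Y Z"
  shows "head_inv d X Z"
proof (cases "\<exists>h2. has_head Y h2")
  case True
  then obtain h2 where h2: "has_head Y h2" by blast
  show ?thesis
  proof (rule head_invI)
    fix h1 h3 assume "has_head X h1" "has_head Z h3"
    then show "heads_compat d h1 h3"
      using head_invD(1)[OF XY _ h2] head_invD(1)[OF YZ h2] heads_compat_trans by blast
  next
    fix h1 assume "has_head X h1" "\<forall>h3. \<not> has_head Z h3"
    then show "top_head d h1"
      using head_invD(1)[OF XY _ h2] head_invD(2)[OF YZ h2] top_head_if_heads_compat by blast
  next
    fix h3 assume "has_head Z h3" "\<forall>h1. \<not> has_head X h1"
    then show "top_head d h3"
      using head_invD(1)[OF YZ h2] head_invD(3)[OF XY h2] top_head_if_heads_compat heads_compat_sym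
      by blast
  qed
next
  case False
  show ?thesis
  proof (rule head_invI)
    fix h1 h3 assume "has_head X h1" "has_head Z h3"
    then show "heads_compat d h1 h3"
      using head_invD(2)[OF XY] head_invD(3)[OF YZ] False heads_compat_if_top_heads by blast
  qed (use head_invD(2)[OF XY] head_invD(3)[OF YZ] False in blast)+
qed

lemma head_inv_Later: "head_inv d A B \<Longrightarrow> head_inv d (Later A) (Later B)"
  unfolding head_inv_def has_head_Later_iff by (fastforce intro: heads_compat_Later top_head_Later)

lemma head_inv_Arr_top: "wfty A \<Longrightarrow> head_inv d (Arr A top) top"
  by (cases d) (auto simp: head_inv_def has_head_top intro: teq.refl)

lemma head_inv_distr:
  "wfty A \<Longrightarrow> wfty B \<Longrightarrow> head_inv True (Later (Arr A B)) (Arr (Later A) (Later B))"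
  by (auto simp: head_inv_def has_head_Later_iff intro: teq.refl wfty.intros)

lemma has_head_Mu_from_subst:
  assumes "teq d X (Mu C)" "wfty (Mu C)" "has_head (Mu C) h"
  obtains h' where "has_head (subst 0 C X) h'" "head_teq d h' h"
proof -
  have wC: "wfty C" "proper 0 C" using assms(2) by (auto elim: wfty.cases)
  have "has_head (subst 0 C (Mu C)) h" using assms(3) by (simp add: has_head_Mu_iff)
  from this wC show thesis
  proof (cases rule: has_head_subst0_cases)
    case (1 n P Q)
    then have "wfty P" "wfty Q" using wf_head_if_has_head[OF _ wC(1)] by fastforce+
    then have "head_teq d (HArr n (subst 0 P X) (subst 0 Q X)) h"
      using 1(2) assms(1) by (simp add: teq_subst_cong)
    then show thesis using that has_head_subst0_HArr[OF 1(1)] by blast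
  next
    case (2 n i)
    then show thesis using that[OF has_head_subst0_HVar[OF 2(1)]] by simp
  next
    case (3 n h')
    then show thesis using has_head_unique[OF assms(3)] by force
  qed
qed

lemma has_head_subst_if_Mu_headless:
  assumes "wfty (Mu C)" "\<forall>h. \<not> has_head (Mu C) h" "has_head (subst 0 C X) h"
  obtains n h' where "n \<noteq> 0" "has_head X h'" "h = head_later n h'"
proof -
  have wC: "wfty C" "proper 0 C" using assms(1) by (auto elim: wfty.cases)
  from assms(3) wC show thesis
  proof (cases rule: has_head_subst0_cases)
    case (1 n P Q)
    then show thesis
      using has_head_subst0_HArr[OF 1(1), of "Mu C"] assms(2) by (simp add: has_head_Mu_iff)
  next
    case (2 n i)
    then show thesis
      using has_head_subst0_HVar[OF 2(1), of "Mu C"] assms(2) by (simp add: has_head_Mu_iff)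
  qed (use that in blast)
qed

lemma head_inv_fold:
  assumes eq: "teq d A (subst 0 C A)" and inv: "head_inv d A (subst 0 C A)" and wM: "wfty (Mu C)"
  shows "head_inv d A (Mu C)"
proof (rule head_invI)
  have AM: "teq d A (Mu C)" using eq wM by (rule teq.fold)
  fix h1 h2 assume h1: "has_head A h1" and h2: "has_head (Mu C) h2"
  obtain h' where "has_head (subst 0 C A) h'" "head_teq d h' h2"
    using has_head_Mu_from_subst[OF AM wM h2] .
  then show "heads_compat d h1 h2" using head_invD(1)[OF inv h1] heads_compat_head_teq by blast
next
  fix h1 assume h1: "has_head A h1" and nM: "\<forall>h2. \<not> has_head (Mu C) h2"
  show "top_head d h1"
  proof (cases "\<exists>h3. has_head (subst 0 C A) h3")
    case True
    then obtain h3 where h3: "has_head (subst 0 C A) h3" by blast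
    then obtain n h' where "n \<noteq> 0" "has_head A h'" "h3 = head_later n h'"
      by (rule has_head_subst_if_Mu_headless[OF wM nM])
    then show ?thesis
      using head_invD(1)[OF inv h1 h3] has_head_unique[OF h1] top_head_if_compat_head_later
      by fastforce
  next
    case False
    then show ?thesis using head_invD(2)[OF inv h1] by blast
  qed
next
  have AM: "teq d A (Mu C)" using eq wM by (rule teq.fold)
  fix h2 assume h2: "has_head (Mu C) h2" and nA: "\<forall>h1. \<not> has_head A h1"
  obtain h' where "has_head (subst 0 C A) h'" "head_teq d h' h2"
    using has_head_Mu_from_subst[OF AM wM h2] .
  then show "top_head d h2" using head_invD(3)[OF inv _ nA] top_head_head_teq by blast
qed

theorem teq_head_inv: "teq d X Y \<Longrightarrow> head_inv d X Y"
proof (induction rule: teq.induct)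
  case (arr A C B D)
  have "heads_compat d (HArr 0 A B) (HArr 0 C D)"
    by (cases d) (use arr.hyps in auto)
  then show ?case by (simp add: head_inv_def)
next
  case (unfold A)
  have "head_inv d (subst 0 A (Mu A)) (subst 0 A (Mu A))"
    using unfold by (intro head_inv_refl wfty_unfold)
  then show ?case unfolding head_inv_def has_head_Mu_iff[of A] .
qed (auto intro: head_inv_refl head_inv_sym head_inv_trans head_inv_Later head_inv_Arr_top
        head_inv_fold head_inv_distr)

section \<open>Removing a bullet\<close>

definition shift_var :: "nat \<Rightarrow> nat \<Rightarrow> nat \<Rightarrow> ty" where
  "shift_var n c i = TVar (if i < c then i else i + n)"

definition shift :: "nat \<Rightarrow> nat \<Rightarrow> ty \<Rightarrow> ty" where
  "shift n c X = psubst (shift_var n c) X"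

lemma shift_0 [simp]: "shift 0 0 X = X"
  unfolding shift_def shift_var_def by simp

lemma shift_TVar [simp]: "shift n c (TVar i) = TVar (if i < c then i else i + n)"
  by (simp add: shift_def shift_var_def)

text \<open>unlater d X is a formal inverse of the bullet applied to X.  Inside the d binders
  traversed so far, each bound variable Y is available twice: index j stands for the inverse
  of the bullet applied to Y, index d + j for Y itself; free variables keep their identity.
  So a guarded occurrence of Y just loses its bullet, and the binder of Y rebinds the first
  copy while the second is instantiated by the unchanged binder.\<close>

fun unlater :: "nat \<Rightarrow> ty \<Rightarrow> ty" where
  "unlater d (TVar i) = (if i < d then TVar i else TVar (i + d))"
| "unlater d (Later A) = shift d 0 A"
| "unlater d (Arr A B) = Arr (unlater d A) (unlater d B)"
| "unlater d (Mu A) = Mu (subst (Suc d) (unlater (Suc d) A) (shift (Suc d) 0 (Mu A)))"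

definition unlater_subst :: "nat \<Rightarrow> nat \<Rightarrow> (nat \<Rightarrow> ty) \<Rightarrow> nat \<Rightarrow> ty" where
  "unlater_subst dR dA \<sigma> u = (if u < dA then unlater dR (\<sigma> u) else shift dR 0 (\<sigma> (u - dA)))"

lemma unlater_psubst_MuI:
  assumes "unlater (Suc dR) (psubst (up \<sigma>) A) =
      psubst (unlater_subst (Suc dR) (Suc dA) (up \<sigma>)) (unlater (Suc dA) A)"
    and "\<And>u. psubst (subst_var (Suc dR) (shift (Suc dR) 0 (psubst \<sigma> (Mu A))))
          (unlater_subst (Suc dR) (Suc dA) (up \<sigma>) u) =
        psubst (up (unlater_subst dR dA \<sigma>)) (subst_var (Suc dA) (shift (Suc dA) 0 (Mu A)) u)"
  shows "unlater dR (psubst \<sigma> (Mu A)) = psubst (unlater_subst dR dA \<sigma>) (unlater dA (Mu A))"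
  using assms by (simp add: subst_eq_psubst psubst_psubst)

lemma unlater_renaming:
  "(\<And>j. dA \<le> j \<Longrightarrow> dR \<le> r j) \<Longrightarrow>
    unlater dR (psubst (\<lambda>i. TVar (r i)) A) =
    psubst (unlater_subst dR dA (\<lambda>i. TVar (r i))) (unlater dA A)"
proof (induction A arbitrary: r dA dR)
  case (TVar j)
  then show ?case using TVar.prems[of j] by (auto simp: unlater_subst_def not_less)
next
  case (Later A)
  show ?case
    by (simp add: psubst_psubst psubst_renaming shift_var_def shift_def unlater_subst_def)
next
  case (Mu A)
  define r' where "r' = (\<lambda>i. case i of 0 \<Rightarrow> 0 | Suc k \<Rightarrow> Suc (r k))"
  have up_r: "up (\<lambda>i. TVar (r i)) = (\<lambda>i. TVar (r' i))"
    by (simp add: up_renaming r'_def)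
  let ?\<tau> = "unlater_subst dR dA (\<lambda>i. TVar (r i))"
  let ?M = "psubst (\<lambda>j. TVar (Suc (r j + dR))) (Mu A)"
  show ?case
  proof (rule unlater_psubst_MuI, unfold up_r)
    show "unlater (Suc dR) (psubst (\<lambda>i. TVar (r' i)) A) =
        psubst (unlater_subst (Suc dR) (Suc dA) (\<lambda>i. TVar (r' i))) (unlater (Suc dA) A)"
      using Mu.prems by (intro Mu.IH) (auto simp: r'_def split: nat.splits)
    have shifted_Mu: "shift (Suc dR) 0 (psubst (\<lambda>i. TVar (r i)) (Mu A)) = ?M"
        "psubst (up ?\<tau>) (shift (Suc dA) 0 (Mu A)) = ?M"
      unfolding shift_def psubst_renaming psubst_psubst
      by (rule psubst_cong; simp add: shift_var_def shift_def unlater_subst_def del: psubst_Mu)+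
    fix u
    consider "u < Suc dA" | "u = Suc dA" | "Suc dA < u" by linarith
    then show "psubst (subst_var (Suc dR) (shift (Suc dR) 0 (psubst (\<lambda>i. TVar (r i)) (Mu A))))
          (unlater_subst (Suc dR) (Suc dA) (\<lambda>i. TVar (r' i)) u) =
        psubst (up ?\<tau>) (subst_var (Suc dA) (shift (Suc dA) 0 (Mu A)) u)"
    proof cases
      case 1
      then show ?thesis
        by (cases u) (auto simp: r'_def subst_var_def unlater_subst_def)
    next
      case 2
      then show ?thesis
        using shifted_Mu by (simp add: r'_def subst_var_def unlater_subst_def del: psubst_Mu)
    next
      case 3
      then obtain v where "u = Suc (Suc (dA + v))"
        by (metis Suc_lessE add_Suc_right less_imp_Suc_add)
      then show ?thesis
        by (auto simp: r'_def subst_var_def unlater_subst_def shift_def shift_var_def)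
    qed
  qed
qed simp_all

lemma unlater_lift0: "subst (Suc d) (unlater (Suc d) (lift 0 Y)) T = lift 0 (unlater d Y)"
proof -
  have renaming: "unlater (Suc d) (psubst (\<lambda>i. TVar (Suc i)) Y) =
      psubst (unlater_subst (Suc d) d (\<lambda>i. TVar (Suc i))) (unlater d Y)"
    by (rule unlater_renaming) simp
  show ?thesis
    unfolding subst_eq_psubst lift0_eq_psubst renaming psubst_psubst
    by (auto intro!: psubst_cong simp: subst_var_def unlater_subst_def shift_def shift_var_def)
qed

lemma lift0_shift: "lift 0 (shift d 0 X) = shift (Suc d) 0 X"
  unfolding lift0_eq_psubst shift_def renaming_psubst
  by (rule psubst_cong) (simp add: shift_var_def)

lemma psubst_subst_var_shift_lift0:
  "psubst (subst_var (Suc d) T) (shift (Suc d) 0 (lift 0 X)) = shift (Suc d) 0 X"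
  unfolding lift0_eq_psubst shift_def psubst_renaming psubst_psubst
  by (rule psubst_cong) (simp add: shift_var_def subst_var_def)

lemma unlater_psubst:
  "(\<And>j. dA \<le> j \<Longrightarrow> \<exists>m. dR \<le> m \<and> \<sigma> j = TVar m) \<Longrightarrow>
    unlater dR (psubst \<sigma> A) = psubst (unlater_subst dR dA \<sigma>) (unlater dA A)"
proof (induction A arbitrary: \<sigma> dA dR)
  case (TVar j)
  show ?case
  proof (cases "j < dA")
    case False
    with TVar.prems[of j] obtain m where "dR \<le> m" "\<sigma> j = TVar m" by auto
    with False show ?thesis by (simp add: unlater_subst_def shift_def shift_var_def)
  qed (simp add: unlater_subst_def)
next
  case (Later A)
  show ?case by (simp add: psubst_psubst shift_var_def shift_def unlater_subst_def)
next
  case (Mu A)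
  let ?\<tau> = "unlater_subst dR dA \<sigma>"
  let ?M = "psubst (\<lambda>j. lift 0 (shift dR 0 (\<sigma> j))) (Mu A)"
  show ?case
  proof (rule unlater_psubst_MuI)
    show "unlater (Suc dR) (psubst (up \<sigma>) A) =
        psubst (unlater_subst (Suc dR) (Suc dA) (up \<sigma>)) (unlater (Suc dA) A)"
    proof (rule Mu.IH)
      fix j assume "Suc dA \<le> j"
      then obtain k where k: "j = Suc k" "dA \<le> k" by (cases j) auto
      with Mu.prems[of k] show "\<exists>m. Suc dR \<le> m \<and> up \<sigma> j = TVar m" by auto
    qed
    have shifted_Mu: "shift (Suc dR) 0 (psubst \<sigma> (Mu A)) = ?M"
        "psubst (up ?\<tau>) (shift (Suc dA) 0 (Mu A)) = ?M"
      unfolding lift0_shift by (simp_all add: shift_def psubst_psubst shift_var_def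
          unlater_subst_def lift0_shift[unfolded shift_def] del: psubst_Mu)
    fix u
    consider "u = 0" | k where "u = Suc k" "k < dA" | "u = Suc dA" | v where "u = Suc (Suc (dA + v))"
      by (metis Suc_lessE add_Suc_right less_imp_Suc_add linorder_neqE_nat not0_implies_Suc)
    then show "psubst (subst_var (Suc dR) (shift (Suc dR) 0 (psubst \<sigma> (Mu A))))
          (unlater_subst (Suc dR) (Suc dA) (up \<sigma>) u) =
        psubst (up ?\<tau>) (subst_var (Suc dA) (shift (Suc dA) 0 (Mu A)) u)"
    proof cases
      case (2 k)
      then show ?thesis
        using unlater_lift0[of dR "\<sigma> k"]
        by (simp add: subst_var_def unlater_subst_def subst_eq_psubst)
    next
      case 3
      then show ?thesis using shifted_Mu
        by (simp add: subst_var_def unlater_subst_def shift_def shift_var_def del: psubst_Mu)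
    next
      case (4 v)
      then show ?thesis
        using psubst_subst_var_shift_lift0[of dR _ "\<sigma> v"] lift0_shift[of dR "\<sigma> v"]
        by (simp add: subst_var_def unlater_subst_def)
    qed (simp add: subst_var_def unlater_subst_def)
  qed
qed (auto simp: unlater_subst_def)

lemma unlater_subst0:
  "unlater 0 (subst 0 A s) = subst 0 (subst 1 (unlater 1 A) (shift 1 0 s)) (unlater 0 s)"
proof -
  have "unlater 0 (psubst (subst_var 0 s) A) =
      psubst (unlater_subst 0 1 (subst_var 0 s)) (unlater 1 A)"
    by (rule unlater_psubst) (auto simp: subst_var_def)
  moreover have "psubst (subst_var 0 t) (shift 1 0 X) = X" for t X
    unfolding shift_def psubst_psubst
    by (rule HOL.trans[OF psubst_cong psubst_TVar]) (simp add: subst_var_def shift_var_def)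
  ultimately show ?thesis
    unfolding subst_eq_psubst psubst_psubst
    by (auto intro!: psubst_cong simp: subst_var_def unlater_subst_def)
qed

lemma tail_end_shift:
  "tail_end (shift n c X) =
    (case tail_end X of Open i k \<Rightarrow> Open (if i < c then i else i + n) k | e \<Rightarrow> e)"
  unfolding shift_def shift_var_def
  using tail_end_renaming[of "\<lambda>i. if i < c then i else i + n" X] by simp

lemma tail_end_unlater:
  "case tail_end X of
     Closed b \<Rightarrow> (\<exists>b'. tail_end (unlater d X) = Closed b' \<and> (b \<longrightarrow> b'))
   | Open i c \<Rightarrow> tail_end (unlater d X) =
       (if c = 0 then Open (if i < d then i else i + d) 0 else Open (i + d) (c - 1))"
proof (induction X arbitrary: d)
  case (TVar x)
  then show ?case by simp
next
  case (Arr X1 X2)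
  show ?case by (simp only: unlater.simps tail_end.simps) (rule Arr.IH(2))
next
  case (Later X)
  then show ?case by (auto simp: tail_end_shift split: endpoint.splits)
next
  case (Mu A)
  have pT: "tail_end (shift (Suc d) 0 (Mu A)) =
      (case tail_end (Mu A) of Open i k \<Rightarrow> Open (i + Suc d) k | e \<Rightarrow> e)"
    by (simp add: tail_end_shift del: tail_end.simps split: endpoint.splits)
  show ?case
  proof (cases "tail_end A")
    case (Closed b)
    with Mu.IH[of "Suc d"] obtain b' where "tail_end (unlater (Suc d) A) = Closed b'" "b \<longrightarrow> b'"
      by auto
    then show ?thesis using Closed by (simp add: subst_eq_psubst tail_end_psubst)
  next
    case (Open i c)
    note IH = Mu.IH[of "Suc d", unfolded Open, simplified]
    show ?thesis
    proof (cases i)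
      case 0
      show ?thesis
      proof (cases "c = 0")
        case True
        then show ?thesis
          using IH Open 0 by (auto simp: subst_eq_psubst tail_end_psubst subst_var_def)
      next
        case False
        then have "tail_end (Mu A) = Closed True" using Open 0 by simp
        then have "tail_end (shift (Suc d) 0 (Mu A)) = Closed True" using pT by simp
        then show ?thesis
          using IH Open 0 False by (auto simp: subst_eq_psubst tail_end_psubst subst_var_def)
      qed
    next
      case (Suc i')
      then show ?thesis using IH Open by (auto simp: subst_eq_psubst tail_end_psubst subst_var_def)
    qed
  qed
qed

lemma top_variant_unlater: "top_variant X \<Longrightarrow> top_variant (unlater d X)"
  using tail_end_unlater[where X=X and d=d] by (auto simp: top_variant_iff_tail_end)

lemma up_shift_var: "up (shift_var n c) = shift_var n (Suc c)"
  by (rule ext) (auto simp: up_def shift_var_def split: nat.splits)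

lemma proper_shift: "c \<le> k \<Longrightarrow> k < c + n \<Longrightarrow> proper k (shift n c X)"
  unfolding shift_def
proof (induction X arbitrary: c k)
  case (Mu X)
  then show ?case by (simp add: up_shift_var)
qed (auto simp: shift_var_def)

lemma proper_subst_shift: "proper k X \<Longrightarrow> k \<le> d \<Longrightarrow> proper k (subst (Suc d) X (shift (Suc d) 0 Y))"
  unfolding subst_eq_psubst by (rule proper_psubst) (auto simp: subst_var_def intro: proper_shift)

lemma proper_unlater: "proper k X \<Longrightarrow> k < d \<Longrightarrow> proper k (unlater d X)"
proof (induction X arbitrary: k d)
  case (Arr X1 X2)
  then show ?case using top_variant_unlater by auto
next
  case (Later X)
  then show ?case by (auto intro: proper_shift)
next
  case (Mu A)
  show ?case
  proof (cases "proper (Suc k) A")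
    case True
    then show ?thesis using Mu by (auto intro: proper_subst_shift)
  next
    case False
    then have "top_variant (Mu A)" using Mu.prems by simp
    then have "top_variant (unlater d (Mu A))" by (rule top_variant_unlater)
    then show ?thesis by (metis proper.simps(4) unlater.simps(4))
  qed
qed auto

lemma wfty_shift: "wfty X \<Longrightarrow> wfty (shift n c X)"
  unfolding shift_def by (rule wfty_psubst) (auto simp: shift_var_def intro: wfty.intros)

lemma wfty_unlater: "wfty X \<Longrightarrow> wfty (unlater d X)"
proof (induction X arbitrary: d rule: wfty.induct)
  case (3 A)
  then show ?case by (auto intro: wfty_shift)
next
  case (4 A)
  then have "wfty (subst (Suc d) (unlater (Suc d) A) (shift (Suc d) 0 (Mu A)))"
    by (auto intro: wfty_subst wfty_shift wfty.intros)
  moreover have "proper 0 (subst (Suc d) (unlater (Suc d) A) (shift (Suc d) 0 (Mu A)))"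
    using 4 by (auto intro: proper_unlater proper_subst_shift)
  ultimately show ?case by (auto intro: wfty.intros)
qed (auto intro: wfty.intros)

lemma teq_shift: "teq d X Y \<Longrightarrow> teq d (shift n c X) (shift n c Y)"
  unfolding shift_def by (rule teq_psubst) (auto simp: shift_var_def intro: wfty.intros)

lemma unlater_top: "unlater 0 top = Mu top"
  by (simp add: top_def shift_def shift_var_def)

lemma teq_Mu_top: "teq d (Mu top) top"
proof -
  have w: "wfty (Mu top)" by (auto intro!: wfty.intros simp: top_def)
  have "subst 0 top (Mu top) = top" unfolding subst_eq_psubst by simp
  then show ?thesis using teq.unfold[OF w] by simp
qed

theorem teq_unlater: "teq d X Y \<Longrightarrow> teq d (unlater 0 X) (unlater 0 Y)"
proof (induction rule: teq.induct)
  case (refl A)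
  then show ?case by (intro teq.refl wfty_unlater)
next
  case (later A B)
  then show ?case by simp
next
  case (arr_top A)
  have wA: "wfty (unlater 0 A)" using arr_top wfty_unlater by blast
  have "teq d (Arr (unlater 0 A) (Mu top)) (Arr (unlater 0 A) top)"
    using wA teq_Mu_top by (auto intro: teq.arr teq.refl)
  moreover have "teq d (Arr (unlater 0 A) top) top" using wA by (rule teq.arr_top)
  ultimately have "teq d (Arr (unlater 0 A) (Mu top)) (Mu top)"
    using teq_Mu_top by (blast intro: teq.trans teq.sym)
  then show ?case by (simp only: unlater.simps(3) unlater_top)
next
  case (unfold A)
  define B where "B = subst 1 (unlater 1 A) (shift 1 0 (Mu A))"
  have e: "unlater 0 (Mu A) = Mu B" by (simp add: B_def)
  have w: "wfty (Mu B)" using unfold wfty_unlater e by metis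
  show ?case unfolding unlater_subst0 B_def[symmetric] e by (rule teq.unfold[OF w])
next
  case (fold A C)
  define DA where "DA = subst 1 (unlater 1 C) (shift 1 0 A)"
  define DM where "DM = subst 1 (unlater 1 C) (shift 1 0 (Mu C))"
  have e: "unlater 0 (Mu C) = Mu DM" by (simp add: DM_def)
  have wM: "wfty (Mu DM)" using fold wfty_unlater e by metis
  have tAM: "teq d A (Mu C)" using fold by (auto intro: teq.fold)
  have wA: "wfty (unlater 0 A)" using fold teq_wfty wfty_unlater by blast
  have wC: "wfty (unlater 1 C)" using fold by (auto elim: wfty.cases intro: wfty_unlater)
  have "teq d DA DM"
    unfolding DA_def DM_def using wC tAM by (intro teq_subst_cong teq_shift)
  then have "teq d (subst 0 DA (unlater 0 A)) (subst 0 DM (unlater 0 A))"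
    using wA by (rule teq_subst)
  moreover have "teq d (unlater 0 A) (subst 0 DA (unlater 0 A))"
    using fold.IH unfolding unlater_subst0 DA_def .
  ultimately have "teq d (unlater 0 A) (subst 0 DM (unlater 0 A))" by (rule teq.trans[rotated])
  then show ?case unfolding e using wM by (rule teq.fold)
next
  case (distr A B)
  have "wfty (Arr A B)" using distr by (auto intro: wfty.intros)
  then show ?case by (simp add: teq.refl)
qed (auto intro: teq.sym teq.trans teq.arr)

theorem proposition4:
  assumes "R = tcong \<or> R = tsimeq"
    and "wfty A" and "wfty B" and "wfty C" and "wfty D"
  shows "(R (Later A) (Later B) \<longleftrightarrow> R A B) \<and>
         (R (Arr A B) (Arr C D) \<longleftrightarrow> ((R A C \<and> R B D) \<or> (R B D \<and> R D top)))"
proof -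
  obtain d where R: "R = teq d" using assms(1) unfolding tcong_def tsimeq_def by blast
  have "teq d (Later A) (Later B) \<longleftrightarrow> teq d A B"
    using teq_unlater[of d "Later A" "Later B"] by (auto intro: teq.later)
  moreover have "teq d (Arr A B) (Arr C D) \<Longrightarrow> (teq d A C \<and> teq d B D) \<or> (teq d B D \<and> teq d D top)"
    using head_invD(1)[OF teq_head_inv, of d "Arr A B" "Arr C D"] by (cases d) auto
  moreover have "teq d (Arr A B) (Arr C D)" if "teq d B D" "teq d D top"
  proof -
    have "teq d (Arr A B) top" "teq d (Arr C D) top"
      using that assms(2,4) by (meson teq.arr teq.arr_top teq.refl teq_trans_sym)+
    then show ?thesis by (meson teq_trans_sym)
  qed
  ultimately show ?thesis unfolding R by (blast intro: teq.arr)
qed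

end
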